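(* Let $n\in\mathbb{N}$ with $n\ge2$ and $I_n:=\int_{(0,\infty)^n}\mathrm{d}u\,\frac{|u|_1e^{-|u|_1}}{\prod_{j=1}^n(u_j+u_{j+1})}$, where $u_{n+1}:=u_1$ and $|u|_1:=u_1+\dots+u_n$. Then \[ I_n=\frac n2\int_{(0,\infty)^n}\mathrm{d}u\,\frac{e^{-|u|_1}}{\prod_{j=1}^{n-1}(u_j+u_{j+1})}. \] *)

theory Defs
  imports "HOL-Analysis.Analysis"
begin

text \<open>Points of (0,\<infinity>)^n are encoded as functions u :: nat \<Rightarrow> real with coordinates
  u 0, ..., u (n-1); the measure is the n-fold product of Lebesgue measure.\<close>

definition pos_orthant :: "nat \<Rightarrow> (nat \<Rightarrow> real) set" where
  "pos_orthant n = {u. \<forall>j<n. 0 < u j}"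

definition l1 :: "nat \<Rightarrow> (nat \<Rightarrow> real) \<Rightarrow> real" where
  "l1 n u = (\<Sum>j<n. u j)"

end

theory Submission
  imports Defs
begin

text \<open>Every coordinate occurs in exactly two of the cyclic pairs u_k + u_(k+1), so |u|_1 is half
  their sum and the integrand of I_n splits into n halves, the k-th being e^(-|u|_1) divided by
  the cyclic product with the factor u_k + u_(k+1) omitted. The cyclic rotation of coordinates
  taking index k to n-1 preserves the product Lebesgue measure, the orthant and |u|_1, and carries
  the k-th half to the one with u_(n-1) + u_0 omitted, whose remaining factors form the chain
  product on the right. Hence all n integrals agree.\<close>

lemma distr_PiM_reindex_bij:
  assumes M: "sigma_finite_measure M" and I: "finite I" and p: "bij_betw p I I"
  shows "distr (PiM I (\<lambda>_. M)) (PiM I (\<lambda>_. M)) (\<lambda>x. \<lambda>i\<in>I. x (p i)) = PiM I (\<lambda>_. M)"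
proof -
  interpret product_sigma_finite "\<lambda>_. M"
    using M by (simp add: product_sigma_finite_def)
  let ?t = "\<lambda>x. \<lambda>i\<in>I. x (p i)"
  define q where "q = inv_into I p"
  have q: "bij_betw q I I"
    unfolding q_def using p by (rule bij_betw_inv_into)
  have pI: "p i \<in> I" and qI: "q i \<in> I" and pq: "p (q i) = i" and qp: "q (p i) = i"
    if "i \<in> I" for i
    using that p q unfolding q_def by (auto simp: bij_betw_def f_inv_into_f inv_into_f_f)
  have t: "?t \<in> PiM I (\<lambda>_. M) \<rightarrow>\<^sub>M PiM I (\<lambda>_. M)"
    by (intro measurable_restrict measurable_component_singleton pI)
  show ?thesis
  proof (rule PiM_eqI[OF I])
    fix A assume A: "\<And>i. i \<in> I \<Longrightarrow> A i \<in> sets M"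
    have "?t -` Pi\<^sub>E I A \<inter> space (PiM I (\<lambda>_. M)) = Pi\<^sub>E I (\<lambda>i. A (q i))"
    proof (intro set_eqI iffI)
      fix x assume "x \<in> ?t -` Pi\<^sub>E I A \<inter> space (PiM I (\<lambda>_. M))"
      then show "x \<in> Pi\<^sub>E I (\<lambda>i. A (q i))"
        by (auto simp: space_PiM PiE_iff) (metis pq qI)
    next
      fix x assume "x \<in> Pi\<^sub>E I (\<lambda>i. A (q i))"
      then show "x \<in> ?t -` Pi\<^sub>E I A \<inter> space (PiM I (\<lambda>_. M))"
        using A[THEN sets.sets_into_space] by (auto simp: space_PiM PiE_iff) (metis qp pI, metis qI subsetD)
    qed
    then have "emeasure (distr (PiM I (\<lambda>_. M)) (PiM I (\<lambda>_. M)) ?t) (Pi\<^sub>E I A)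
        = (\<Prod>i\<in>I. emeasure M (A (q i)))"
      using A qI by (simp add: emeasure_distr[OF t] sets_PiM_I_finite I emeasure_PiM[OF I])
    also have "\<dots> = (\<Prod>i\<in>I. emeasure M (A i))"
      by (rule prod.reindex_bij_betw[OF q])
    finally show "emeasure (distr (PiM I (\<lambda>_. M)) (PiM I (\<lambda>_. M)) ?t) (Pi\<^sub>E I A)
        = (\<Prod>i\<in>I. emeasure M (A i))" .
  qed simp
qed

lemma nn_integral_PiM_reindex_bij:
  assumes "sigma_finite_measure M" and "finite I" and p: "bij_betw p I I"
    and f: "f \<in> borel_measurable (PiM I (\<lambda>_. M))"
  shows "(\<integral>\<^sup>+ x. f x \<partial>PiM I (\<lambda>_. M)) = (\<integral>\<^sup>+ x. f (\<lambda>i\<in>I. x (p i)) \<partial>PiM I (\<lambda>_. M))"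
proof -
  have "(\<lambda>x. \<lambda>i\<in>I. x (p i)) \<in> PiM I (\<lambda>_. M) \<rightarrow>\<^sub>M PiM I (\<lambda>_. M)"
    using p by (intro measurable_restrict measurable_component_singleton) (auto simp: bij_betw_def)
  with f show ?thesis
    by (subst (1) distr_PiM_reindex_bij[OF assms(1-3), symmetric]) (simp add: nn_integral_distr)
qed

lemma bij_betw_rotate_mod:
  fixes n s :: nat
  assumes "0 < n"
  shows "bij_betw (\<lambda>j. (j + s) mod n) {..<n} {..<n}"
proof -
  have "inj_on (\<lambda>j. (j + s) mod n) {..<n}"
  proof (rule inj_onI)
    fix x y assume "x \<in> {..<n}" "y \<in> {..<n}" and eq: "(x + s) mod n = (y + s) mod n"
    have "x mod n = y mod n"
      using eq unfolding nat_mod_eq_iff by auto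
    with \<open>x \<in> {..<n}\<close> \<open>y \<in> {..<n}\<close> show "x = y"
      by simp
  qed
  moreover from this have "(\<lambda>j. (j + s) mod n) ` {..<n} = {..<n}"
    using assms by (intro endo_inj_surj) auto
  ultimately show ?thesis
    by (simp add: bij_betw_def)
qed

lemma sum_rotate_mod:
  fixes f :: "nat \<Rightarrow> 'a::comm_monoid_add"
  assumes "0 < n"
  shows "(\<Sum>j<n. f ((j + s) mod n)) = (\<Sum>j<n. f j)"
  using sum.reindex_bij_betw[OF bij_betw_rotate_mod[OF assms]] .

lemma prod_rotate_mod:
  fixes f :: "nat \<Rightarrow> 'a::comm_monoid_mult"
  assumes "0 < n"
  shows "(\<Prod>j<n. f ((j + s) mod n)) = (\<Prod>j<n. f j)"
  using prod.reindex_bij_betw[OF bij_betw_rotate_mod[OF assms]] .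

definition rotate_coords :: "nat \<Rightarrow> nat \<Rightarrow> (nat \<Rightarrow> real) \<Rightarrow> nat \<Rightarrow> real" where
  "rotate_coords n s u = (\<lambda>i\<in>{..<n}. u ((i + s) mod n))"

definition cyc_pair :: "nat \<Rightarrow> (nat \<Rightarrow> real) \<Rightarrow> nat \<Rightarrow> real" where
  "cyc_pair n u j = u j + u ((j + 1) mod n)"

text \<open>On the orthant no factor vanishes, so this is e^(-|u|_1) divided by the cyclic product
  with the k-th factor omitted.\<close>

definition omit_factor_density :: "nat \<Rightarrow> nat \<Rightarrow> (nat \<Rightarrow> real) \<Rightarrow> real" where
  "omit_factor_density n k u = exp (- l1 n u) * cyc_pair n u k / (\<Prod>j<n. cyc_pair n u j)"

lemma l1_rotate_coords: "0 < n \<Longrightarrow> l1 n (rotate_coords n s u) = l1 n u"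
  unfolding l1_def rotate_coords_def by (simp add: sum_rotate_mod)

lemma cyc_pair_rotate_coords:
  assumes "0 < n" "j < n"
  shows "cyc_pair n (rotate_coords n s u) j = cyc_pair n u ((j + s) mod n)"
proof -
  have "((j + 1) mod n + s) mod n = ((j + s) mod n + 1) mod n"
    unfolding mod_add_left_eq by (simp add: ac_simps)
  then show ?thesis
    using assms by (simp add: cyc_pair_def rotate_coords_def)
qed

lemma rotate_coords_in_pos_orthant_iff:
  assumes "0 < n"
  shows "rotate_coords n s u \<in> pos_orthant n \<longleftrightarrow> u \<in> pos_orthant n"
proof -
  have "(\<lambda>j. (j + s) mod n) ` {..<n} = {..<n}"
    using bij_betw_rotate_mod[OF assms] by (simp add: bij_betw_def)
  then have "(\<forall>j<n. 0 < u ((j + s) mod n)) \<longleftrightarrow> (\<forall>i<n. 0 < u i)"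
    by (metis (mono_tags, lifting) imageE imageI lessThan_iff)
  then show ?thesis
    by (simp add: pos_orthant_def rotate_coords_def)
qed

lemma omit_factor_density_rotate_coords:
  assumes "0 < n" "k < n"
  shows "omit_factor_density n k (rotate_coords n (n - 1 - k) u) = omit_factor_density n (n - 1) u"
proof -
  have "(k + (n - 1 - k)) mod n = n - 1"
    using assms by simp
  moreover have "(\<Prod>j<n. cyc_pair n (rotate_coords n s u) j) = (\<Prod>j<n. cyc_pair n u j)" for s
    using prod_rotate_mod[OF assms(1), of "cyc_pair n u" s]
    by (simp add: cyc_pair_rotate_coords[OF assms(1)])
  ultimately show ?thesis
    unfolding omit_factor_density_def l1_rotate_coords[OF assms(1)] cyc_pair_rotate_coords[OF assms]
    by simp
qed

lemma l1_eq_half_sum_cyc_pair: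
  assumes "0 < n"
  shows "l1 n u = (\<Sum>k<n. cyc_pair n u k) / 2"
  using sum_rotate_mod[OF assms, of u 1]
  by (simp add: l1_def cyc_pair_def sum.distrib)

lemma l1_exp_div_prod_cyc_pair:
  assumes "0 < n"
  shows "l1 n u * exp (- l1 n u) / (\<Prod>j<n. cyc_pair n u j) = (\<Sum>k<n. omit_factor_density n k u) / 2"
proof -
  have "(\<Sum>k<n. omit_factor_density n k u)
      = exp (- l1 n u) * (\<Sum>k<n. cyc_pair n u k) / (\<Prod>j<n. cyc_pair n u j)"
    by (simp add: omit_factor_density_def sum_distrib_left sum_divide_distrib)
  then show ?thesis
    by (subst (1) l1_eq_half_sum_cyc_pair[OF assms]) (simp add: mult.commute)
qed

lemma cyc_pair_pos: "u \<in> pos_orthant n \<Longrightarrow> j < n \<Longrightarrow> 0 < cyc_pair n u j"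
  by (simp add: pos_orthant_def cyc_pair_def add_pos_pos)

lemma omit_factor_density_nonneg: "u \<in> pos_orthant n \<Longrightarrow> k < n \<Longrightarrow> 0 \<le> omit_factor_density n k u"
  unfolding omit_factor_density_def
  by (intro divide_nonneg_pos mult_nonneg_nonneg prod_pos less_imp_le cyc_pair_pos) auto

lemma omit_factor_density_last:
  assumes "u \<in> pos_orthant n" "0 < n"
  shows "omit_factor_density n (n - 1) u = exp (- l1 n u) / (\<Prod>j<n - 1. u j + u (j + 1))"
proof -
  have "(\<Prod>j<n. cyc_pair n u j) = (\<Prod>j<n - 1. cyc_pair n u j) * cyc_pair n u (n - 1)"
    using prod.lessThan_Suc[of "cyc_pair n u" "n - 1"] assms(2) by simp
  moreover have "(\<Prod>j<n - 1. cyc_pair n u j) = (\<Prod>j<n - 1. u j + u (j + 1))"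
    by (rule prod.cong) (auto simp: cyc_pair_def)
  moreover have "cyc_pair n u (n - 1) \<noteq> 0"
    using cyc_pair_pos[OF assms(1), of "n - 1"] assms(2) by simp
  ultimately show ?thesis
    by (simp add: omit_factor_density_def)
qed

lemma measurable_component_lessThan [measurable]:
  fixes j n :: nat
  assumes "j < n"
  shows " (\<lambda>u. u j) \<in> borel_measurable (PiM {..<n} (\<lambda>_. lborel :: real measure))"
  using measurable_component_singleton[of j "{..<n}" "\<lambda>_. lborel :: real measure"] assms by simp

lemma measurable_component_mod [measurable]:
  fixes j n :: nat
  assumes "0 < n"
  shows " (\<lambda>u. u (j mod n)) \<in> borel_measurable (PiM {..<n} (\<lambda>_. lborel :: real measure))"
  using assms by (simp add: measurable_component_lessThan)

lemma measurable_indicator_pos_orthant [measurable]: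
  "(indicator (pos_orthant n) :: _ \<Rightarrow> ennreal) \<in> borel_measurable (PiM {..<n} (\<lambda>_. lborel :: real measure))"
proof -
  have "pos_orthant n \<inter> space (PiM {..<n} (\<lambda>_. lborel :: real measure)) = PiE {..<n} (\<lambda>_. {0<..})"
    by (auto simp: pos_orthant_def space_PiM PiE_iff)
  then show ?thesis
    by (simp add: borel_measurable_indicator_iff sets_PiM_I_finite)
qed

lemma measurable_omit_factor_density [measurable]:
  "0 < n \<Longrightarrow> k < n \<Longrightarrow> omit_factor_density n k \<in> borel_measurable (PiM {..<n} (\<lambda>_. lborel))"
  unfolding omit_factor_density_def cyc_pair_def l1_def by measurable

lemma nn_integral_omit_factor_density_rotate:
  assumes "0 < n" "k < n"
  shows "(\<integral>\<^sup>+ u \<in> pos_orthant n. ennreal (omit_factor_density n k u) \<partial>PiM {..<n} (\<lambda>_. lborel))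
       = (\<integral>\<^sup>+ u \<in> pos_orthant n. ennreal (omit_factor_density n (n - 1) u) \<partial>PiM {..<n} (\<lambda>_. lborel))"
proof -
  let ?M = "PiM {..<n} (\<lambda>_. lborel :: real measure)"
  let ?f = "\<lambda>u. ennreal (omit_factor_density n k u) * indicator (pos_orthant n) u"
  have "(\<integral>\<^sup>+ u. ?f u \<partial>?M) = (\<integral>\<^sup>+ u. ?f (rotate_coords n (n - 1 - k) u) \<partial>?M)"
    unfolding rotate_coords_def using assms
    by (intro nn_integral_PiM_reindex_bij sigma_finite_lborel bij_betw_rotate_mod) simp_all
  also have "\<dots> = (\<integral>\<^sup>+ u. ennreal (omit_factor_density n (n - 1) u) * indicator (pos_orthant n) u \<partial>?M)"
    using assms
    by (simp only: omit_factor_density_rotate_coords rotate_coords_in_pos_orthant_iff indicator_def)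
  finally show ?thesis .
qed

lemma ennreal_l1_exp_div_prod_cyc_pair:
  assumes "0 < n" "u \<in> pos_orthant n"
  shows "ennreal (l1 n u * exp (- l1 n u) / (\<Prod>j<n. cyc_pair n u j))
       = (\<Sum>k<n. ennreal (omit_factor_density n k u)) / 2"
proof -
  have nonneg: "0 \<le> omit_factor_density n k u" if "k \<in> {..<n}" for k
    using that assms(2) by (simp add: omit_factor_density_nonneg)
  have "ennreal (l1 n u * exp (- l1 n u) / (\<Prod>j<n. cyc_pair n u j))
      = ennreal ((\<Sum>k<n. omit_factor_density n k u) / 2)"
    unfolding l1_exp_div_prod_cyc_pair[OF assms(1)] ..
  also have "\<dots> = ennreal (\<Sum>k<n. omit_factor_density n k u) / 2"
    by (rule ennreal_divide_numeral[symmetric]) (rule sum_nonneg[OF nonneg])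
  also have "\<dots> = (\<Sum>k<n. ennreal (omit_factor_density n k u)) / 2"
    using sum_ennreal[of "{..<n}" "\<lambda>k. omit_factor_density n k u"] nonneg by simp
  finally show ?thesis .
qed

lemma nn_integral_split_omit_factor_density:
  assumes "0 < n"
  shows "(\<integral>\<^sup>+ u \<in> pos_orthant n. ennreal (l1 n u * exp (- l1 n u) / (\<Prod>j<n. cyc_pair n u j))
           \<partial>PiM {..<n} (\<lambda>_. lborel))
       = (\<Sum>k<n. \<integral>\<^sup>+ u \<in> pos_orthant n. ennreal (omit_factor_density n k u) \<partial>PiM {..<n} (\<lambda>_. lborel)) / 2"
proof -
  have "(\<integral>\<^sup>+ u \<in> pos_orthant n. ennreal (l1 n u * exp (- l1 n u) / (\<Prod>j<n. cyc_pair n u j))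
           \<partial>PiM {..<n} (\<lambda>_. lborel))
      = (\<integral>\<^sup>+ u. (\<Sum>k<n. ennreal (omit_factor_density n k u) * indicator (pos_orthant n) u) / 2
           \<partial>PiM {..<n} (\<lambda>_. lborel))"
  proof (intro nn_integral_cong)
    fix u
    show "ennreal (l1 n u * exp (- l1 n u) / (\<Prod>j<n. cyc_pair n u j)) * indicator (pos_orthant n) u
        = (\<Sum>k<n. ennreal (omit_factor_density n k u) * indicator (pos_orthant n) u) / 2"
      by (cases "u \<in> pos_orthant n") (simp_all add: ennreal_l1_exp_div_prod_cyc_pair[OF assms])
  qed
  also have "\<dots> = (\<integral>\<^sup>+ u. (\<Sum>k<n. ennreal (omit_factor_density n k u) * indicator (pos_orthant n) u)
           \<partial>PiM {..<n} (\<lambda>_. lborel)) / 2"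
    using assms by (intro nn_integral_divide) measurable
  also have "\<dots> = (\<Sum>k<n. \<integral>\<^sup>+ u \<in> pos_orthant n. ennreal (omit_factor_density n k u)
           \<partial>PiM {..<n} (\<lambda>_. lborel)) / 2"
    using assms by (subst nn_integral_sum) auto
  finally show ?thesis .
qed

lemma sum_lessThan_const_div_2_ennreal: "(\<Sum>k<n. J) / 2 = ennreal (real n / 2) * (J :: ennreal)"
proof -
  have "ennreal (real n / 2) = of_nat n / 2"
    by (simp add: ennreal_divide_numeral[symmetric] ennreal_of_nat_eq_real_of_nat)
  then show ?thesis
    by (simp add: ennreal_times_divide mult.commute)
qed

theorem lemma4p27:
  fixes n :: nat
  assumes "n \<ge> 2"
  shows "(\<integral>\<^sup>+ u \<in> pos_orthant n.
            ennreal (l1 n u * exp (- l1 n u) / (\<Prod>j<n. u j + u ((j + 1) mod n)))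
          \<partial>(PiM {..<n} (\<lambda>_. lborel)))
       = ennreal (real n / 2) *
         (\<integral>\<^sup>+ u \<in> pos_orthant n.
            ennreal (exp (- l1 n u) / (\<Prod>j<n - 1. u j + u (j + 1)))
          \<partial>(PiM {..<n} (\<lambda>_. lborel)))"
proof -
  have n: "0 < n"
    using assms by simp
  let ?I = "\<lambda>k. \<integral>\<^sup>+ u \<in> pos_orthant n. ennreal (omit_factor_density n k u) \<partial>PiM {..<n} (\<lambda>_. lborel)"
  have "(\<integral>\<^sup>+ u \<in> pos_orthant n.
            ennreal (l1 n u * exp (- l1 n u) / (\<Prod>j<n. u j + u ((j + 1) mod n)))
          \<partial>(PiM {..<n} (\<lambda>_. lborel))) = (\<Sum>k<n. ?I k) / 2"
    using nn_integral_split_omit_factor_density[OF n] unfolding cyc_pair_def .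
  also have "(\<Sum>k<n. ?I k) = (\<Sum>k<n. ?I (n - 1))"
    by (intro sum.cong refl nn_integral_omit_factor_density_rotate[OF n]) simp
  also have "\<dots> / 2 = ennreal (real n / 2) * ?I (n - 1)"
    by (rule sum_lessThan_const_div_2_ennreal)
  also have "?I (n - 1) = (\<integral>\<^sup>+ u \<in> pos_orthant n.
            ennreal (exp (- l1 n u) / (\<Prod>j<n - 1. u j + u (j + 1))) \<partial>(PiM {..<n} (\<lambda>_. lborel)))"
    using omit_factor_density_last[OF _ n] by (intro nn_integral_cong) (simp split: split_indicator)
  finally show ?thesis .
qed

end
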